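(* Let $M\ge1$, $h_1,\dots,h_M\ge0$, $P>0$, $\sigma^2>0$ and $\lambda\ge0$. Then the problem $\max_{0\le\alpha_m\le1,\ m=1,\dots,M}\ \log\Big(1+\frac{\sum_{m=1}^M\alpha_m h_mP}{\sigma^2}\Big)+\sum_{m=1}^M\lambda(1-\alpha_m)h_mP$ is equivalent to (in particular, has the same optimal value as) the problem $\max_{0\le\alpha\le1}\ \log\Big(1+\frac{\alpha\sum_{m=1}^M h_mP}{\sigma^2}\Big)+(1-\alpha)\sum_{m=1}^M\lambda h_mP.$
   Context: Here $h_m$ is the channel power gain to receive antenna $m$, $\alpha_m$ is the power splitting ratio at antenna $m$, and $\log$ is the natural logarithm. *)

theory Defs
  imports Complex_Main
begin

end

theory Submission
  imports Defs
begin

text \<open>Both objectives depend on the splitting ratios only through the harvested power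
  \<open>s = \<Sum>m. \<alpha>\<^sub>m h\<^sub>m P\<close>, namely as \<open>ln (1 + s/\<sigma>\<^sup>2) + \<lambda> (H - s)\<close> with \<open>H = \<Sum>m. h\<^sub>m P\<close>.
  As the \<open>\<alpha>\<^sub>m\<close> range over \<open>[0,1]\<close>, the value \<open>s\<close> sweeps out exactly \<open>[0, H]\<close>, which is
  also the range of \<open>\<alpha> H\<close> for a common ratio \<open>\<alpha> \<in> [0,1]\<close>. Hence the two problems have the
  same set of objective values, and in particular the same supremum.\<close>

lemma weighted_sum_image_unit_box:
  fixes w :: "'i \<Rightarrow> real"
  assumes w_nonneg: "\<And>i. i \<in> I \<Longrightarrow> w i \<ge> 0"
  shows "(\<lambda>a. \<Sum>i\<in>I. a i * w i) ` {a. \<forall>i\<in>I. 0 \<le> a i \<and> a i \<le> 1}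
         = (\<lambda>c. c * sum w I) ` {0..1}"
proof (intro equalityI image_subsetI)
  fix a :: "'i \<Rightarrow> real" assume "a \<in> {a. \<forall>i\<in>I. 0 \<le> a i \<and> a i \<le> 1}"
  then have a: "\<And>i. i \<in> I \<Longrightarrow> 0 \<le> a i \<and> a i \<le> 1" by simp
  define s where "s = (\<Sum>i\<in>I. a i * w i)"
  have "0 \<le> s" unfolding s_def using a w_nonneg by (intro sum_nonneg) simp
  moreover have "s \<le> sum w I"
    unfolding s_def using a w_nonneg by (intro sum_mono) (simp add: mult_left_le_one_le)
  ultimately obtain c where "c \<in> {0..1}" "s = c * sum w I"
  proof (cases "sum w I = 0")
    case True
    then show ?thesis using that[of 0] \<open>0 \<le> s\<close> \<open>s \<le> sum w I\<close> by simp
  next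
    case False
    then show ?thesis using that[of "s / sum w I"] \<open>0 \<le> s\<close> \<open>s \<le> sum w I\<close> by simp
  qed
  then show "(\<Sum>i\<in>I. a i * w i) \<in> (\<lambda>c. c * sum w I) ` {0..1}" unfolding s_def by blast
next
  fix c :: real assume "c \<in> {0..1}"
  then show "c * sum w I \<in> (\<lambda>a. \<Sum>i\<in>I. a i * w i) ` {a. \<forall>i\<in>I. 0 \<le> a i \<and> a i \<le> 1}"
    by (intro rev_image_eqI[of "\<lambda>_. c"]) (simp_all add: sum_distrib_left)
qed

theorem lemma5p1:
  fixes M :: nat and h :: "nat \<Rightarrow> real" and P \<sigma>2 lam :: real
  assumes "M \<ge> 1"
    and "\<And>m. m \<in> {1..M} \<Longrightarrow> h m \<ge> 0"
    and "P > 0" and "\<sigma>2 > 0" and "lam \<ge> 0"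
  shows "(SUP \<alpha>\<in>{\<alpha> :: nat \<Rightarrow> real. \<forall>m\<in>{1..M}. 0 \<le> \<alpha> m \<and> \<alpha> m \<le> 1}.
            ln (1 + (\<Sum>m=1..M. \<alpha> m * h m * P) / \<sigma>2) + (\<Sum>m=1..M. lam * (1 - \<alpha> m) * h m * P))
       = (SUP \<alpha>\<in>{0..1::real}.
            ln (1 + \<alpha> * (\<Sum>m=1..M. h m * P) / \<sigma>2) + (1 - \<alpha>) * (\<Sum>m=1..M. lam * h m * P))"
proof -
  define H where "H = (\<Sum>m=1..M. h m * P)"
  define harvested where "harvested = (\<lambda>\<alpha>. \<Sum>m=1..M. \<alpha> m * (h m * P))"
  define objective where "objective = (\<lambda>s. ln (1 + s / \<sigma>2) + lam * (H - s))"
  let ?box = "{\<alpha> :: nat \<Rightarrow> real. \<forall>m\<in>{1..M}. 0 \<le> \<alpha> m \<and> \<alpha> m \<le> 1}"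
  have per_antenna: "ln (1 + (\<Sum>m=1..M. \<alpha> m * h m * P) / \<sigma>2) + (\<Sum>m=1..M. lam * (1 - \<alpha> m) * h m * P)
      = objective (harvested \<alpha>)" for \<alpha>
    unfolding objective_def harvested_def H_def
    by (simp add: sum_distrib_left sum_subtractf algebra_simps)
  have common_ratio: "ln (1 + c * (\<Sum>m=1..M. h m * P) / \<sigma>2) + (1 - c) * (\<Sum>m=1..M. lam * h m * P)
      = objective (c * H)" for c
  proof -
    have "(\<Sum>m=1..M. lam * h m * P) = lam * H"
      unfolding H_def by (simp add: sum_distrib_left mult.assoc)
    then show ?thesis unfolding objective_def H_def[symmetric] by (simp add: algebra_simps)
  qed
  have "harvested ` ?box = (\<lambda>c. c * H) ` {0..1}"
    unfolding harvested_def H_def using assms(2,3)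
    by (intro weighted_sum_image_unit_box) simp
  then have "(\<lambda>\<alpha>. objective (harvested \<alpha>)) ` ?box = (\<lambda>c. objective (c * H)) ` {0..1}"
    by (metis image_image)
  then show ?thesis
    unfolding per_antenna common_ratio by simp
qed

end
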